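(* Suppose $\varepsilon|_{\Omega_k}\in C^{1,1}(\overline{\Omega_k})$ for each $k$, and each interface function $g_k$ is piecewise $C^2$ on $[0,L_x]$. Then there is a constant $C_{10}>0$ independent of $h$ such that $$\|\varepsilon-\varepsilon_h\|_{L^q(\Omega)}\le C_{10}\,h^{1/q}$$ for all $1\le q<\infty$ and all $h$ small enough.
   Context: $H,L_x>0$, $\Omega=(0,L_x)\times(-H,H)$. There are $I\ge1$ interfaces given by $g_k:[0,L_x]\to\mathbb R$ ($k=1,\dots,I$), piecewise of the form $\sum_l\mathbf 1_{[x_{lk},x_{(l+1)k})}\phi_{lk}$ with Lipschitz pieces and nonzero jumps at the finitely many break points; the graphs are separated from each other and from $x_2=\pm H$ by some $\delta>0$, and $\Omega_k$ ($k=1,\dots,I+1$) is the region of $\Omega$ between the graphs of $g_{k-1}$ and $g_k$ ($g_0\equiv -H$, $g_{I+1}\equiv H$). $\varepsilon:\Omega\to\mathbb C$ is the relative permittivity. Slices: $-H=h_0<h_1<\dots<h_S=H$, $S_j=\{(x_1,x_2)\in\Omega:h_{j-1}\le x_2<h_j\}$, $\Delta h_j=h_j-h_{j-1}$, $h=\max_j\Delta h_j$, with $h/\min_j\Delta h_j\le C_\Delta$ for a fixed constant $C_\Delta>0$, and every point where $g_k'=0$ lies on an inter-slice line $x_2=h_j$. The stairstep approximation is $\varepsilon_h(x_1,x_2)=\varepsilon(x_1,h_{j-1/2})$ on $S_j$, $h_{j-1/2}=(h_{j-1}+h_j)/2$ (in slices where $\varepsilon$ is piecewise constant and interfaces are already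 stairsteps, $\varepsilon_h=\varepsilon$). *)

theory Defs
  imports "HOL-Analysis.Analysis"
begin

definition Omega :: "real \<Rightarrow> real \<Rightarrow> (real \<times> real) set" where
  "Omega H Lx = {0<..<Lx} \<times> {-H<..<H}"

definition iface :: "real \<Rightarrow> nat \<Rightarrow> (nat \<Rightarrow> real \<Rightarrow> real) \<Rightarrow> nat \<Rightarrow> real \<Rightarrow> real" where
  "iface H I g k x = (if k = 0 then -H else if k = Suc I then H else g k x)"

definition region :: "real \<Rightarrow> real \<Rightarrow> nat \<Rightarrow> (nat \<Rightarrow> real \<Rightarrow> real) \<Rightarrow> nat \<Rightarrow> (real \<times> real) set" where
  "region H Lx I g k = {p \<in> Omega H Lx. iface H I g (k - 1) (fst p) < snd p \<and> snd p < iface H I g k (fst p)}"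

definition piecewise_rep :: "real \<Rightarrow> (real \<Rightarrow> real) \<Rightarrow> real list \<Rightarrow> (nat \<Rightarrow> real \<Rightarrow> real) \<Rightarrow> bool" where
  "piecewise_rep Lx g xs phi \<longleftrightarrow>
     length xs \<ge> 2 \<and> hd xs = 0 \<and> last xs = Lx \<and> sorted_wrt (<) xs \<and>
     (\<forall>l < length xs - 1. \<forall>x. xs!l \<le> x \<and> (x < xs!(l+1) \<or> (l + 2 = length xs \<and> x = Lx))
         \<longrightarrow> g x = phi l x)"

definition piecewise_lipschitz_iface :: "real \<Rightarrow> (real \<Rightarrow> real) \<Rightarrow> bool" where
  "piecewise_lipschitz_iface Lx g \<longleftrightarrow> (\<exists>xs phi. piecewise_rep Lx g xs phi \<and>
     (\<forall>l < length xs - 1. \<exists>L. lipschitz_on L {xs!l..xs!(l+1)} (phi l)) \<and>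
     (\<forall>l. 0 < l \<and> l < length xs - 1 \<longrightarrow> phi (l - 1) (xs!l) \<noteq> phi l (xs!l)))"

definition C2_on :: "real set \<Rightarrow> (real \<Rightarrow> real) \<Rightarrow> bool" where
  "C2_on S f \<longleftrightarrow> (\<exists>f1 f2. (\<forall>x\<in>S. (f has_real_derivative f1 x) (at x within S)) \<and>
     (\<forall>x\<in>S. (f1 has_real_derivative f2 x) (at x within S)) \<and> continuous_on S f2)"

definition piecewise_C2 :: "real \<Rightarrow> (real \<Rightarrow> real) \<Rightarrow> bool" where
  "piecewise_C2 Lx g \<longleftrightarrow> (\<exists>xs phi. piecewise_rep Lx g xs phi \<and>
     (\<forall>l < length xs - 1. C2_on {xs!l..xs!(l+1)} (phi l)))"

text \<open>f restricted to U belongs to C^{1,1}(closure U): f is differentiable on U with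
  bounded function values and first derivatives, and Lipschitz first derivatives
  (hence all extend to the closure).\<close>
definition C11_on :: "(real \<times> real) set \<Rightarrow> (real \<times> real \<Rightarrow> complex) \<Rightarrow> bool" where
  "C11_on U f \<longleftrightarrow> (\<exists>d1 d2 M L.
     (\<forall>x\<in>U. (f has_derivative (\<lambda>v. of_real (fst v) * d1 x + of_real (snd v) * d2 x)) (at x within U)) \<and>
     (\<forall>x\<in>U. cmod (f x) \<le> M \<and> cmod (d1 x) \<le> M \<and> cmod (d2 x) \<le> M) \<and>
     (\<forall>x\<in>U. \<forall>y\<in>U. cmod (d1 x - d1 y) \<le> L * dist x y \<and> cmod (d2 x - d2 y) \<le> L * dist x y))"

definition slicing :: "real \<Rightarrow> nat \<Rightarrow> (nat \<Rightarrow> real) \<Rightarrow> bool" where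
  "slicing H S hs \<longleftrightarrow> S \<ge> 1 \<and> hs 0 = -H \<and> hs S = H \<and> (\<forall>j\<in>{1..S}. hs (j - 1) < hs j)"

definition mesh :: "nat \<Rightarrow> (nat \<Rightarrow> real) \<Rightarrow> real" where
  "mesh S hs = Max ((\<lambda>j. hs j - hs (j - 1)) ` {1..S})"

definition mesh_ratio_ok :: "real \<Rightarrow> nat \<Rightarrow> (nat \<Rightarrow> real) \<Rightarrow> bool" where
  "mesh_ratio_ok CD S hs \<longleftrightarrow> (\<forall>j\<in>{1..S}. mesh S hs \<le> CD * (hs j - hs (j - 1)))"

definition flat_points_on_lines :: "real \<Rightarrow> nat \<Rightarrow> (nat \<Rightarrow> real \<Rightarrow> real) \<Rightarrow> nat \<Rightarrow> (nat \<Rightarrow> real) \<Rightarrow> bool" where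
  "flat_points_on_lines Lx I g S hs \<longleftrightarrow>
     (\<forall>k\<in>{1..I}. \<forall>x\<in>{0<..<Lx}. (g k has_real_derivative 0) (at x) \<longrightarrow> (\<exists>j\<in>{0..S}. g k x = hs j))"

definition eps_h :: "(real \<times> real \<Rightarrow> complex) \<Rightarrow> nat \<Rightarrow> (nat \<Rightarrow> real) \<Rightarrow> real \<times> real \<Rightarrow> complex" where
  "eps_h eps S hs p = (\<Sum>j\<in>{1..S}. if hs (j - 1) \<le> snd p \<and> snd p < hs j
                         then eps (fst p, (hs (j - 1) + hs j) / 2) else 0)"

definition Lq_norm :: "real \<Rightarrow> (real \<times> real) set \<Rightarrow> (real \<times> real \<Rightarrow> complex) \<Rightarrow> ennreal" where
  "Lq_norm q A f = (let I = (\<integral>\<^sup>+ x. ennreal (cmod (f x) powr q) * indicator A x \<partial>lebesgue)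
                    in if I = \<infinity> then \<infinity> else ennreal (enn2real I powr (1 / q)))"

end

theory Submission
  imports Defs
begin

text \<open>On each region \<open>\<epsilon>\<close> is bounded and Lipschitz, and \<open>\<epsilon>\<^sub>h(x,y) = \<epsilon>(x,m)\<close> where \<open>m\<close> is the
  midline of the slice containing \<open>y\<close>, so \<open>|y - m| \<le> h\<close>. If no interface separates \<open>(x,y)\<close>
  from \<open>(x,m)\<close>, the error is \<open>O(h)\<close>. Otherwise \<open>(x,y)\<close> lies within distance \<open>h\<close> of an
  interface graph; these strips have measure \<open>O(h)\<close> and there the error is merely bounded.
  Hence \<open>\<integral>|\<epsilon> - \<epsilon>\<^sub>h|\<^sup>q = O(h)\<close>. The exceptional points, namely the interface graphs and
  the vertical lines through points where an interface crosses a midline, form a null set: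
  interfaces are non-critical off the slice boundaries, so such crossings are isolated.\<close>

lemma slicing_strict_mono:
  assumes "slicing H S hs" "i < j" "j \<le> S"
  shows "hs i < hs j"
  using assms(2,3)
proof (induction j)
  case 0 then show ?case by simp
next
  case (Suc j)
  have step: "hs j < hs (Suc j)"
    using assms(1) Suc.prems unfolding slicing_def by force
  show ?case
    using Suc step by (cases "i = j") auto
qed

lemma slicing_mono:
  assumes "slicing H S hs" "i \<le> j" "j \<le> S"
  shows "hs i \<le> hs j"
  using slicing_strict_mono[OF assms(1)] assms by (cases "i = j") (auto intro: less_imp_le)

lemma slice_bounds:
  assumes sl: "slicing H S hs" and j: "j \<in> {1..S}"
  shows "-H \<le> hs (j - 1)" "hs j \<le> H" "hs (j - 1) < hs j" "hs j - hs (j - 1) \<le> mesh S hs"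
proof -
  show "-H \<le> hs (j - 1)" using slicing_mono[OF sl, of 0 "j - 1"] sl j unfolding slicing_def by auto
  show "hs j \<le> H" using slicing_mono[OF sl, of j S] sl j unfolding slicing_def by auto
  show "hs (j - 1) < hs j" using sl j unfolding slicing_def by auto
  show "hs j - hs (j - 1) \<le> mesh S hs" unfolding mesh_def using j by (intro Max_ge) auto
qed

lemma mesh_pos:
  assumes "slicing H S hs"
  shows "mesh S hs > 0"
  using slice_bounds[OF assms, of 1] assms unfolding slicing_def by force

lemma slice_exists:
  assumes sl: "slicing H S hs" and y: "-H \<le> y" "y < H"
  obtains j where "j \<in> {1..S}" "hs (j - 1) \<le> y" "y < hs j"
proof -
  have ex: "\<exists>j. j \<le> S \<and> y < hs j" using sl y unfolding slicing_def by auto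
  define j where "j = (LEAST j. j \<le> S \<and> y < hs j)"
  have j: "j \<le> S" "y < hs j" using LeastI_ex[OF ex] unfolding j_def by auto
  have "j \<noteq> 0" using j(2) sl y(1) unfolding slicing_def by (cases j) auto
  moreover have "\<not> (j - 1 \<le> S \<and> y < hs (j - 1))"
    using not_less_Least[of "j - 1" "\<lambda>j. j \<le> S \<and> y < hs j"] \<open>j \<noteq> 0\<close>
    unfolding j_def by auto
  ultimately show ?thesis using j by (intro that[of j]) auto
qed

lemma slice_unique:
  assumes sl: "slicing H S hs" and "j \<in> {1..S}" "i \<in> {1..S}"
    and "hs (j - 1) \<le> y" "y < hs j" "hs (i - 1) \<le> y" "y < hs i"
  shows "i = j"
proof (rule ccontr)
  assume "i \<noteq> j"
  then consider "i < j" | "j < i" by linarith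
  then show False
  proof cases
    case 1 then have "hs i \<le> hs (j - 1)" using assms by (intro slicing_mono[OF sl]) auto
    then show ?thesis using assms by auto
  next
    case 2 then have "hs j \<le> hs (i - 1)" using assms by (intro slicing_mono[OF sl]) auto
    then show ?thesis using assms by auto
  qed
qed

lemma eps_h_on_slice:
  assumes sl: "slicing H S hs" and j: "j \<in> {1..S}" "hs (j - 1) \<le> snd p" "snd p < hs j"
  shows "eps_h eps S hs p = eps (fst p, (hs (j - 1) + hs j) / 2)"
proof -
  have "eps_h eps S hs p = (\<Sum>i\<in>{1..S}. if i = j then eps (fst p, (hs (j - 1) + hs j) / 2) else 0)"
    unfolding eps_h_def
  proof (rule sum.cong[OF refl])
    fix i assume i: "i \<in> {1..S}"
    have "i \<noteq> j \<Longrightarrow> \<not> (hs (i - 1) \<le> snd p \<and> snd p < hs i)"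
      using slice_unique[OF sl j(1) i j(2,3)] by blast
    then show "(if hs (i - 1) \<le> snd p \<and> snd p < hs i then eps (fst p, (hs (i - 1) + hs i) / 2) else 0) =
      (if i = j then eps (fst p, (hs (j - 1) + hs j) / 2) else 0)"
      using j(2,3) by (cases "i = j") (simp_all only: if_True if_False simp_thms)
  qed
  then show ?thesis using j(1) by simp
qed

lemma slice_midpoint_not_node:
  assumes sl: "slicing H S hs" and j: "j \<in> {1..S}" and i: "i \<le> S"
  shows "hs i \<noteq> (hs (j - 1) + hs j) / 2"
proof -
  have lt: "hs (j - 1) < hs j" using slice_bounds(3)[OF sl j] .
  consider "i \<le> j - 1" | "j \<le> i" by linarith
  then show ?thesis
  proof cases
    case 1 then have "hs i \<le> hs (j - 1)" using j by (intro slicing_mono[OF sl]) auto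
    then show ?thesis using lt by auto
  next
    case 2 then have "hs j \<le> hs i" using i by (intro slicing_mono[OF sl]) auto
    then show ?thesis using lt by auto
  qed
qed

lemma piecewise_rep_nodes:
  assumes "piecewise_rep Lx g xs phi" "l < length xs - 1"
  shows "0 \<le> xs!l" "xs!l < xs!(l+1)" "xs!(l+1) \<le> Lx"
proof -
  have len: "length xs \<ge> 2" "hd xs = 0" "last xs = Lx" "sorted_wrt (<) xs"
    using assms(1) unfolding piecewise_rep_def by auto
  have ne: "xs \<noteq> []" using len by auto
  have h0: "xs!0 = 0" using len(2) hd_conv_nth[OF ne] by simp
  have hl: "xs!(length xs - 1) = Lx" using len(3) last_conv_nth[OF ne] by simp
  have le: "xs!i \<le> xs!j" if "i \<le> j" "j < length xs" for i j
    using sorted_wrt_nth_less[OF len(4)] that by (cases "i = j") (auto intro: less_imp_le)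
  show "0 \<le> xs!l" using le[of 0 l] h0 assms(2) by auto
  show "xs!l < xs!(l+1)" using sorted_wrt_nth_less[OF len(4)] assms(2) by auto
  show "xs!(l+1) \<le> Lx" using le[of "l+1" "length xs - 1"] hl assms(2) by auto
qed

lemma piecewise_rep_cover:
  assumes rep: "piecewise_rep Lx g xs phi" and x: "0 \<le> x" "x \<le> Lx"
  obtains l where "l < length xs - 1" "xs!l \<le> x" "x \<le> xs!(l+1)" "g x = phi l x"
proof -
  have len: "length xs \<ge> 2" "hd xs = 0" "last xs = Lx"
    using rep unfolding piecewise_rep_def by auto
  have ne: "xs \<noteq> []" using len by auto
  have h0: "xs!0 = 0" using len(2) hd_conv_nth[OF ne] by simp
  have hl: "xs!(length xs - 1) = Lx" using len(3) last_conv_nth[OF ne] by simp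
  define P where "P = (\<lambda>l. l < length xs - 1 \<and> xs!l \<le> x)"
  have P0: "P 0" using h0 x len unfolding P_def by auto
  define l where "l = (GREATEST l. P l)"
  have bnd: "\<forall>y. P y \<longrightarrow> y \<le> length xs" unfolding P_def by auto
  have Pl: "P l" unfolding l_def by (rule GreatestI_nat[where P=P, OF P0]) (use bnd in auto)
  have gr: "\<And>y. P y \<Longrightarrow> y \<le> l" unfolding l_def by (rule Greatest_le_nat[where P=P]) (use bnd in auto)
  have cond: "x < xs!(l+1) \<or> (l + 2 = length xs \<and> x = Lx)"
  proof (cases "l + 2 = length xs")
    case True
    then have "xs!(l+1) = Lx" using hl by (metis add_diff_cancel_right' one_add_one add.assoc)
    then show ?thesis using x True by auto
  next
    case False
    then have "l + 1 < length xs - 1" using Pl len unfolding P_def by auto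
    then have "\<not> P (l+1)" using gr by fastforce
    then show ?thesis using \<open>l + 1 < length xs - 1\<close> unfolding P_def by auto
  qed
  have "g x = phi l x" using rep Pl cond unfolding piecewise_rep_def P_def by blast
  moreover have "x \<le> xs!(l+1)"
  proof (cases "x < xs!(l+1)")
    case False
    then have "l + 1 = length xs - 1" "x = Lx" using cond by auto
    then show ?thesis using hl by simp
  qed simp
  ultimately show ?thesis using that Pl unfolding P_def by auto
qed

lemma C2_on_continuous_on:
  assumes "C2_on {a..b} f"
  shows "continuous_on {a..b} f"
  using assms unfolding C2_on_def by (auto intro: DERIV_continuous_on)

lemma limit_point_of_level_set:
  fixes f :: "real \<Rightarrow> real"
  assumes d: "(f has_real_derivative D) (at y)" and lim: "y islimpt E" and E: "\<forall>z\<in>E. f z = m"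
  shows "f y = m" "D = 0"
proof -
  have nt: "at y within E \<noteq> bot" using lim trivial_limit_within by blast
  have "(f \<longlongrightarrow> f y) (at y within E)"
    using DERIV_continuous[OF d] by (simp add: isCont_def tendsto_mono[OF at_le[OF subset_UNIV]])
  moreover have "(f \<longlongrightarrow> m) (at y within E)"
    by (rule tendsto_eventually) (use E in \<open>auto simp: eventually_at_filter\<close>)
  ultimately show fy: "f y = m" by (rule tendsto_unique[OF nt])
  have "((\<lambda>z. (f z - f y) / (z - y)) \<longlongrightarrow> D) (at y within E)"
    using has_field_derivative_iff d has_field_derivative_at_within by blast
  moreover have "((\<lambda>z. (f z - f y) / (z - y)) \<longlongrightarrow> 0) (at y within E)"
    by (rule tendsto_eventually) (use E fy in \<open>auto simp: eventually_at_filter\<close>)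
  ultimately show "D = 0" using tendsto_unique[OF nt] by blast
qed

lemma countable_level_set_noncritical:
  fixes f :: "real \<Rightarrow> real"
  assumes deriv: "\<And>x. x \<in> {a<..<b} \<Longrightarrow> (f has_real_derivative f' x) (at x)"
    and noncritical: "\<And>x. x \<in> {a<..<b} \<Longrightarrow> f x = m \<Longrightarrow> f' x \<noteq> 0"
  shows "countable {x \<in> {a<..<b}. f x = m}"
proof -
  let ?E = "{x \<in> {a<..<b}. f x = m}"
  have "\<not> y islimpt ?E" if y: "y \<in> {a<..<b}" for y
    using limit_point_of_level_set[OF deriv[OF y], of ?E m] noncritical[OF y] by blast
  then have "?E sparse_in {a<..<b}" by (subst sparse_in_open) auto
  then have "countable ({a<..<b} \<inter> ?E)" by (intro sparse_imp_countable) auto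
  moreover have "{a<..<b} \<inter> ?E = ?E" by auto
  ultimately show ?thesis by simp
qed

lemma piecewise_C2_level_set_countable:
  assumes C2: "piecewise_C2 Lx g"
    and noncritical: "\<forall>x\<in>{0<..<Lx}. (g has_real_derivative 0) (at x) \<longrightarrow> g x \<noteq> m"
  shows "countable {x\<in>{0..Lx}. g x = m}"
proof -
  obtain xs phi where rep: "piecewise_rep Lx g xs phi"
    and c2: "\<forall>l < length xs - 1. C2_on {xs!l..xs!(l+1)} (phi l)"
    using C2 unfolding piecewise_C2_def by blast
  define E where "E l = {x \<in> {xs!l<..<xs!(l+1)}. phi l x = m}" for l
  have sub: "{x\<in>{0..Lx}. g x = m} \<subseteq> set xs \<union> (\<Union>l\<in>{..<length xs - 1}. E l)"
  proof
    fix x assume x: "x \<in> {x\<in>{0..Lx}. g x = m}"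
    then obtain l where l: "l < length xs - 1" "xs!l \<le> x" "x \<le> xs!(l+1)" "g x = phi l x"
      using piecewise_rep_cover[OF rep] by auto
    have "xs!l \<in> set xs" "xs!(l+1) \<in> set xs" using l(1) by auto
    then show "x \<in> set xs \<union> (\<Union>l\<in>{..<length xs - 1}. E l)"
      using l x unfolding E_def by (cases "x = xs!l \<or> x = xs!(l+1)") auto
  qed
  have "countable (E l)" if l: "l < length xs - 1" for l
  proof -
    let ?a = "xs!l" and ?b = "xs!(l+1)"
    obtain f1 where f1: "\<forall>x\<in>{?a..?b}. (phi l has_real_derivative f1 x) (at x within {?a..?b})"
      using c2 l unfolding C2_on_def by blast
    have geq: "g z = phi l z" if "z \<in> {?a<..<?b}" for z
      using rep l that unfolding piecewise_rep_def by auto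
    have dphi: "(phi l has_real_derivative f1 y) (at y)" if y: "y \<in> {?a<..<?b}" for y
    proof -
      have "(phi l has_real_derivative f1 y) (at y within {?a..?b})" using f1 y by auto
      moreover have "at y within {?a..?b} = at y" using y by (intro at_within_Icc_at) auto
      ultimately show ?thesis by simp
    qed
    moreover have "f1 y \<noteq> 0" if y: "y \<in> {?a<..<?b}" and "phi l y = m" for y
    proof
      assume "f1 y = 0"
      then have "(g has_real_derivative 0) (at y)"
        using has_field_derivative_transform_within_open[OF dphi[OF y], of "{?a<..<?b}" g] y geq by auto
      moreover have "y \<in> {0<..<Lx}" using y piecewise_rep_nodes[OF rep l] by auto
      ultimately show False using noncritical geq[OF y] \<open>phi l y = m\<close> by auto
    qed
    ultimately show ?thesis unfolding E_def by (rule countable_level_set_noncritical)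
  qed
  then have "countable (\<Union>l\<in>{..<length xs - 1}. E l)"
    by (intro countable_UN[OF countable_finite]) auto
  then have "countable (set xs \<union> (\<Union>l\<in>{..<length xs - 1}. E l))"
    using countable_finite[OF finite_set] by (rule countable_Un[rotated])
  then show ?thesis using sub countable_subset by blast
qed

lemma Omega_off_interfaces_in_region:
  assumes p: "p \<in> Omega H Lx" and off: "\<forall>k\<in>{1..I}. snd p \<noteq> g k (fst p)"
  obtains k where "k \<in> {1..I+1}" "p \<in> region H Lx I g k"
proof -
  let ?x = "fst p" and ?y = "snd p"
  have py: "-H < ?y" "?y < H" using p unfolding Omega_def by (auto simp: mem_Times_iff)
  have i0: "iface H I g 0 ?x = -H" and iI: "iface H I g (Suc I) ?x = H" unfolding iface_def by auto
  have ex: "\<exists>k. k \<le> I + 1 \<and> ?y < iface H I g k ?x" using py iI by (intro exI[of _ "I+1"]) auto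
  define k where "k = (LEAST k. k \<le> I + 1 \<and> ?y < iface H I g k ?x)"
  have k: "k \<le> I + 1" "?y < iface H I g k ?x" using LeastI_ex[OF ex] unfolding k_def by auto
  have k0: "k \<noteq> 0" using k(2) i0 py by (cases k) auto
  have "\<not> (k - 1 \<le> I + 1 \<and> ?y < iface H I g (k - 1) ?x)"
    using not_less_Least[of "k - 1" "\<lambda>k. k \<le> I + 1 \<and> ?y < iface H I g k ?x"] k0
    unfolding k_def by auto
  then have le: "iface H I g (k - 1) ?x \<le> ?y" using k by auto
  have ne: "iface H I g (k - 1) ?x \<noteq> ?y"
  proof (cases "k - 1 = 0")
    case True then show ?thesis using i0 py by simp
  next
    case False
    then have "k - 1 \<in> {1..I}" using k by auto
    then show ?thesis using bspec[OF off \<open>k - 1 \<in> {1..I}\<close>] False unfolding iface_def by auto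
  qed
  have "p \<in> region H Lx I g k" unfolding region_def using p le ne k by auto
  then show ?thesis using k0 k by (intro that[of k]) auto
qed

lemma region_vertical_stable:
  assumes p: "(x, y) \<in> region H Lx I g k" and k: "k \<in> {1..I+1}"
    and y': "-H < y'" "y' < H" and far: "\<forall>i\<in>{1..I}. \<bar>y - y'\<bar> < \<bar>y - g i x\<bar>"
  shows "(x, y') \<in> region H Lx I g k"
proof -
  have x: "x \<in> {0<..<Lx}" and lo: "iface H I g (k - 1) x < y" and hi: "y < iface H I g k x"
    using p unfolding region_def Omega_def by auto
  have "iface H I g (k - 1) x < y'"
  proof (cases "k - 1 = 0")
    case True then show ?thesis using y' unfolding iface_def by simp
  next
    case False
    then have "k - 1 \<in> {1..I}" using k by auto
    then show ?thesis using far lo False unfolding iface_def by force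
  qed
  moreover have "y' < iface H I g k x"
  proof (cases "k = Suc I")
    case True then show ?thesis using y' unfolding iface_def by simp
  next
    case False
    then have "k \<in> {1..I}" using k by auto
    then show ?thesis using far hi False unfolding iface_def by force
  qed
  ultimately show ?thesis using x y' unfolding region_def Omega_def by auto
qed

lemma region_vertical_segment:
  assumes "(x, y1) \<in> region H Lx I g k" and "(x, y2) \<in> region H Lx I g k"
  shows "{x} \<times> {min y1 y2..max y1 y2} \<subseteq> region H Lx I g k"
  using assms unfolding region_def Omega_def by (auto simp: mem_Times_iff min_def max_def split: if_splits)

lemma C11_on_bounded_lipschitz:
  assumes "C11_on U f"
  obtains M where "M \<ge> 0" "\<forall>p\<in>U. cmod (f p) \<le> M"
    "\<And>S p q. S \<subseteq> U \<Longrightarrow> convex S \<Longrightarrow> p \<in> S \<Longrightarrow> q \<in> S \<Longrightarrow> cmod (f p - f q) \<le> M * norm (p - q)"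
proof -
  obtain d1 d2 M0 where
    der: "\<forall>x\<in>U. (f has_derivative (\<lambda>v. of_real (fst v) * d1 x + of_real (snd v) * d2 x)) (at x within U)"
    and bd: "\<forall>x\<in>U. cmod (f x) \<le> M0 \<and> cmod (d1 x) \<le> M0 \<and> cmod (d2 x) \<le> M0"
    using assms unfolding C11_on_def by blast
  define M where "M = 2 * max 0 M0"
  have lip: "cmod (f p - f q) \<le> M * norm (p - q)"
    if S: "S \<subseteq> U" "convex S" "p \<in> S" "q \<in> S" for S p q
  proof (rule differentiable_bound[OF S(2) _ _ S(3,4)])
    fix x assume x: "x \<in> S"
    show "(f has_derivative (\<lambda>v. of_real (fst v) * d1 x + of_real (snd v) * d2 x)) (at x within S)"
      using der x S(1) by (meson has_derivative_subset subsetD)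
    show "onorm (\<lambda>v. of_real (fst v) * d1 x + of_real (snd v) * d2 x) \<le> M"
    proof (rule onorm_le)
      fix v :: "real \<times> real"
      have "cmod (of_real (fst v) * d1 x + of_real (snd v) * d2 x)
          \<le> \<bar>fst v\<bar> * cmod (d1 x) + \<bar>snd v\<bar> * cmod (d2 x)"
        by (metis norm_mult norm_of_real norm_triangle_ineq)
      also have "\<dots> \<le> norm v * max 0 M0 + norm v * max 0 M0"
      proof -
        have "x \<in> U" using x S(1) by blast
        then have "cmod (d1 x) \<le> max 0 M0" "cmod (d2 x) \<le> max 0 M0"
          using bd by (auto simp: le_max_iff_disj)
        then show ?thesis using norm_fst_le[of "fst v" "snd v"] norm_snd_le[of "snd v" "fst v"]
          by (intro add_mono mult_mono) auto
      qed
      finally show "cmod (of_real (fst v) * d1 x + of_real (snd v) * d2 x) \<le> M * norm v"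
        unfolding M_def by (simp add: mult_ac)
    qed
  qed
  have "\<forall>p\<in>U. cmod (f p) \<le> M" using bd unfolding M_def by force
  then show ?thesis using that[of M] lip unfolding M_def by auto
qed

lemma regions_uniform_bounds:
  assumes "\<forall>k\<in>{1..I+1}. C11_on (region H Lx I g k) eps"
  obtains M where "M > 0"
    "\<forall>k\<in>{1..I+1}. \<forall>p\<in>region H Lx I g k. cmod (eps p) \<le> M"
    "\<forall>k\<in>{1..I+1}. \<forall>x y y'. (x, y) \<in> region H Lx I g k \<longrightarrow> (x, y') \<in> region H Lx I g k \<longrightarrow>
       cmod (eps (x, y) - eps (x, y')) \<le> M * \<bar>y - y'\<bar>"
proof -
  have "\<forall>k\<in>{1..I+1}. \<exists>M. M \<ge> 0 \<and> (\<forall>p\<in>region H Lx I g k. cmod (eps p) \<le> M) \<and>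
     (\<forall>x y y'. (x, y) \<in> region H Lx I g k \<longrightarrow> (x, y') \<in> region H Lx I g k \<longrightarrow>
       cmod (eps (x, y) - eps (x, y')) \<le> M * \<bar>y - y'\<bar>)"
  proof
    fix k assume "k \<in> {1..I+1}"
    then obtain M where M: "M \<ge> 0" "\<forall>p\<in>region H Lx I g k. cmod (eps p) \<le> M"
      "\<And>S p q. S \<subseteq> region H Lx I g k \<Longrightarrow> convex S \<Longrightarrow> p \<in> S \<Longrightarrow> q \<in> S \<Longrightarrow>
         cmod (eps p - eps q) \<le> M * norm (p - q)"
      using C11_on_bounded_lipschitz assms by metis
    have "cmod (eps (x, y) - eps (x, y')) \<le> M * \<bar>y - y'\<bar>"
      if "(x, y) \<in> region H Lx I g k" "(x, y') \<in> region H Lx I g k" for x y y'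
    proof -
      have "convex ({x} \<times> {min y y'..max y y'})" by (simp add: convex_Times)
      from M(3)[OF region_vertical_segment[OF that] this, of "(x, y)" "(x, y')"]
      show ?thesis by (simp add: norm_Pair)
    qed
    then show "\<exists>M. M \<ge> 0 \<and> (\<forall>p\<in>region H Lx I g k. cmod (eps p) \<le> M) \<and>
     (\<forall>x y y'. (x, y) \<in> region H Lx I g k \<longrightarrow> (x, y') \<in> region H Lx I g k \<longrightarrow>
       cmod (eps (x, y) - eps (x, y')) \<le> M * \<bar>y - y'\<bar>)" using M(1,2) by blast
  qed
  then obtain MM where MM: "\<And>k. k \<in> {1..I+1} \<Longrightarrow> MM k \<ge> 0 \<and>
     (\<forall>p\<in>region H Lx I g k. cmod (eps p) \<le> MM k) \<and>
     (\<forall>x y y'. (x, y) \<in> region H Lx I g k \<longrightarrow> (x, y') \<in> region H Lx I g k \<longrightarrow>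
       cmod (eps (x, y) - eps (x, y')) \<le> MM k * \<bar>y - y'\<bar>)"
    by metis
  define M where "M = 1 + (\<Sum>k\<in>{1..I+1}. MM k)"
  have le: "MM k \<le> M" if "k \<in> {1..I+1}" for k
    unfolding M_def using that MM member_le_sum[of k "{1..I+1}" MM] by auto
  have "M > 0" unfolding M_def using MM sum_nonneg[of "{1..I+1}" MM] by force
  moreover have "\<forall>k\<in>{1..I+1}. \<forall>p\<in>region H Lx I g k. cmod (eps p) \<le> M"
    using MM le by (meson order_trans)
  moreover have "\<forall>k\<in>{1..I+1}. \<forall>x y y'. (x, y) \<in> region H Lx I g k \<longrightarrow> (x, y') \<in> region H Lx I g k \<longrightarrow>
       cmod (eps (x, y) - eps (x, y')) \<le> M * \<bar>y - y'\<bar>"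
    using MM le by (meson abs_ge_zero mult_right_mono order_trans)
  ultimately show ?thesis using that by blast
qed

lemma emeasure_lborel_Times:
  fixes A B :: "real set"
  assumes "A \<in> sets lborel" "B \<in> sets lborel"
  shows "emeasure (lborel :: (real \<times> real) measure) (A \<times> B) = emeasure lborel A * emeasure lborel B"
  using lborel.emeasure_pair_measure_Times[OF assms] by (simp add: lborel_prod)

lemma countable_Times_UNIV_null:
  fixes A :: "real set"
  assumes "countable A"
  shows "A \<times> (UNIV :: real set) \<in> null_sets lborel"
proof -
  have A: "A \<in> sets lborel" "emeasure lborel A = 0"
    using countable_imp_null_set_lborel[OF assms] by auto
  have "A \<times> (UNIV :: real set) \<in> sets (lborel \<Otimes>\<^sub>M lborel)"
    using A by (intro pair_measureI) auto
  then have "A \<times> (UNIV :: real set) \<in> sets lborel"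
    by (subst (asm) lborel_prod)
  then show ?thesis
    using emeasure_lborel_Times[OF A(1), of UNIV] A by (simp add: null_sets_def)
qed

lemma Omega_measure:
  assumes "H > 0" "Lx > 0"
  shows "Omega H Lx \<in> sets borel" "emeasure lborel (Omega H Lx) = ennreal (2 * H * Lx)"
proof -
  show "Omega H Lx \<in> sets borel" unfolding Omega_def by (intro borel_open open_Times) auto
  have "emeasure lborel (Omega H Lx) = ennreal Lx * ennreal (2 * H)"
    unfolding Omega_def using assms by (subst emeasure_lborel_Times) auto
  then show "emeasure lborel (Omega H Lx) = ennreal (2 * H * Lx)"
    using assms by (simp add: ennreal_mult[symmetric] mult_ac)
qed

definition tube :: "real \<Rightarrow> real \<Rightarrow> (real \<Rightarrow> real) \<Rightarrow> real \<Rightarrow> (real \<times> real) set" where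
  "tube a b f r = {p. fst p \<in> {a..b} \<and> \<bar>snd p - f (fst p)\<bar> \<le> r}"

lemma tube_measure:
  fixes f :: "real \<Rightarrow> real"
  assumes f: "continuous_on {a..b} f" and ab: "a \<le> b" and r: "r \<ge> 0"
  shows "tube a b f r \<in> sets borel" "emeasure lborel (tube a b f r) = ennreal (2 * r * (b - a))"
proof -
  have eq: "tube a b f r = ({a..b} \<times> UNIV) \<inter> (\<lambda>p. snd p - f (fst p)) -` {-r..r}"
    unfolding tube_def by auto
  have "continuous_on ({a..b} \<times> UNIV) (\<lambda>p :: real \<times> real. snd p - f (fst p))"
    by (intro continuous_intros continuous_on_compose2[OF f]) auto
  then have "closed (tube a b f r)" unfolding eq
    by (intro continuous_closed_preimage) (auto intro: closed_Times)
  then show T: "tube a b f r \<in> sets borel" by simp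
  have "emeasure lborel (tube a b f r) = emeasure (lborel \<Otimes>\<^sub>M lborel) (tube a b f r)"
    by (simp add: lborel_prod)
  also have "\<dots> = (\<integral>\<^sup>+x. emeasure lborel (Pair x -` tube a b f r) \<partial>lborel)"
    by (rule lborel.emeasure_pair_measure_alt) (unfold lborel_prod, use T in simp)
  also have "\<dots> = (\<integral>\<^sup>+x. ennreal (2 * r) * indicator {a..b} x \<partial>lborel)"
  proof (rule nn_integral_cong)
    fix x :: real
    have "Pair x -` tube a b f r = (if x \<in> {a..b} then {f x - r..f x + r} else {})"
      unfolding tube_def by auto
    then show "emeasure lborel (Pair x -` tube a b f r) = ennreal (2 * r) * indicator {a..b} x"
      using r by (auto simp: indicator_def)
  qed
  also have "\<dots> = ennreal (2 * r * (b - a))"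
    using ab r by (simp add: nn_integral_cmult_indicator ennreal_mult)
  finally show "emeasure lborel (tube a b f r) = ennreal (2 * r * (b - a))" .
qed

lemma piecewise_continuous_graph_tubes:
  assumes rep: "piecewise_rep Lx g xs phi"
    and cont: "\<forall>l < length xs - 1. continuous_on {xs!l..xs!(l+1)} (phi l)"
  obtains T where
    "\<And>r. r \<ge> 0 \<Longrightarrow> T r \<in> sets borel"
    "\<And>r. r \<ge> 0 \<Longrightarrow> emeasure lborel (T r) \<le> ennreal (2 * Lx * real (length xs) * r)"
    "\<And>r p. fst p \<in> {0..Lx} \<Longrightarrow> \<bar>snd p - g (fst p)\<bar> \<le> r \<Longrightarrow> p \<in> T r"
proof -
  define T where "T r = (\<Union>l<length xs - 1. tube (xs!l) (xs!(l+1)) (phi l) r)" for r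
  have nodes: "0 \<le> xs!l" "xs!l < xs!(l+1)" "xs!(l+1) \<le> Lx" if "l < length xs - 1" for l
    using piecewise_rep_nodes[OF rep that] by auto
  have Lx: "0 \<le> Lx"
    using nodes[of 0] rep unfolding piecewise_rep_def by auto
  have tubes: "tube (xs!l) (xs!(l+1)) (phi l) r \<in> sets borel"
      "emeasure lborel (tube (xs!l) (xs!(l+1)) (phi l) r) \<le> ennreal (2 * r * Lx)"
    if "l < length xs - 1" "r \<ge> 0" for l r
    using tube_measure[OF cont[rule_format, OF that(1)] _ that(2)] nodes[OF that(1)] that(2)
    by (auto intro!: ennreal_leI mult_left_mono)
  have "T r \<in> sets borel" if "r \<ge> 0" for r
    unfolding T_def using tubes(1)[OF _ that] by auto
  moreover have "emeasure lborel (T r) \<le> ennreal (2 * Lx * real (length xs) * r)" if r: "r \<ge> 0" for r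
  proof -
    have "emeasure lborel (T r) \<le> (\<Sum>l<length xs - 1. emeasure lborel (tube (xs!l) (xs!(l+1)) (phi l) r))"
      unfolding T_def using tubes(1)[OF _ r] by (intro emeasure_subadditive_finite) auto
    also have "\<dots> \<le> (\<Sum>l<length xs - 1. ennreal (2 * r * Lx))"
      using tubes(2)[OF _ r] by (intro sum_mono) auto
    also have "\<dots> = ennreal (real (length xs - 1) * (2 * r * Lx))"
      using r Lx by (simp add: ennreal_of_nat_eq_real_of_nat ennreal_mult)
    also have "\<dots> \<le> ennreal (2 * Lx * real (length xs) * r)"
    proof (rule ennreal_leI)
      have "real (length xs - 1) * (2 * r * Lx) \<le> real (length xs) * (2 * r * Lx)"
        using r Lx by (intro mult_right_mono) auto
      then show "real (length xs - 1) * (2 * r * Lx) \<le> 2 * Lx * real (length xs) * r"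
        by (simp add: mult_ac)
    qed
    finally show ?thesis .
  qed
  moreover have "p \<in> T r" if p: "fst p \<in> {0..Lx}" "\<bar>snd p - g (fst p)\<bar> \<le> r" for p r
  proof -
    obtain l where "l < length xs - 1" "xs!l \<le> fst p" "fst p \<le> xs!(l+1)" "g (fst p) = phi l (fst p)"
      using piecewise_rep_cover[OF rep] p(1) by auto
    then show ?thesis unfolding T_def tube_def using p(2) by auto
  qed
  ultimately show ?thesis using that by blast
qed

lemma piecewise_C2_graph_tubes:
  assumes K: "finite K" and C2: "\<forall>k\<in>K. piecewise_C2 Lx (g k)"
  obtains c T where "c \<ge> 0"
    "\<And>r. r \<ge> 0 \<Longrightarrow> T r \<in> sets borel"
    "\<And>r. r \<ge> 0 \<Longrightarrow> emeasure lborel (T r) \<le> ennreal (c * r)"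
    "\<And>r k p. k \<in> K \<Longrightarrow> fst p \<in> {0..Lx} \<Longrightarrow> \<bar>snd p - g k (fst p)\<bar> \<le> r \<Longrightarrow> p \<in> T r"
proof -
  have "\<forall>k\<in>K. \<exists>c T. c \<ge> 0 \<and> (\<forall>r\<ge>0. T r \<in> sets borel \<and> emeasure lborel (T r) \<le> ennreal (c * r)) \<and>
      (\<forall>r p. fst p \<in> {0..Lx} \<longrightarrow> \<bar>snd p - g k (fst p)\<bar> \<le> r \<longrightarrow> p \<in> T r)"
  proof
    fix k assume "k \<in> K"
    then obtain xs phi where rep: "piecewise_rep Lx (g k) xs phi"
      and c2: "\<forall>l < length xs - 1. C2_on {xs!l..xs!(l+1)} (phi l)"
      using C2 unfolding piecewise_C2_def by blast
    obtain T where T: "\<And>r. r \<ge> 0 \<Longrightarrow> T r \<in> sets borel"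
      "\<And>r. r \<ge> 0 \<Longrightarrow> emeasure lborel (T r) \<le> ennreal (2 * Lx * real (length xs) * r)"
      "\<And>r p. fst p \<in> {0..Lx} \<Longrightarrow> \<bar>snd p - g k (fst p)\<bar> \<le> r \<Longrightarrow> p \<in> T r"
      using piecewise_continuous_graph_tubes[OF rep] c2 C2_on_continuous_on by metis
    have "0 \<le> Lx"
      using piecewise_rep_nodes[OF rep, of 0] rep unfolding piecewise_rep_def by auto
    then show "\<exists>c T. c \<ge> 0 \<and> (\<forall>r\<ge>0. T r \<in> sets borel \<and> emeasure lborel (T r) \<le> ennreal (c * r)) \<and>
      (\<forall>r p. fst p \<in> {0..Lx} \<longrightarrow> \<bar>snd p - g k (fst p)\<bar> \<le> r \<longrightarrow> p \<in> T r)"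
      using T by (intro exI[of _ "2 * Lx * real (length xs)"] exI[of _ T]) auto
  qed
  then obtain c T where cT: "\<And>k. k \<in> K \<Longrightarrow> c k \<ge> 0 \<and>
      (\<forall>r\<ge>0. T k r \<in> sets borel \<and> emeasure lborel (T k r) \<le> ennreal (c k * r)) \<and>
      (\<forall>r p. fst p \<in> {0..Lx} \<longrightarrow> \<bar>snd p - g k (fst p)\<bar> \<le> r \<longrightarrow> p \<in> T k r)"
    by metis
  have "(\<Sum>k\<in>K. c k) \<ge> 0" using cT by (intro sum_nonneg) auto
  moreover have "(\<Union>k\<in>K. T k r) \<in> sets borel" if "r \<ge> 0" for r
    using cT that K by auto
  moreover have "emeasure lborel (\<Union>k\<in>K. T k r) \<le> ennreal ((\<Sum>k\<in>K. c k) * r)" if r: "r \<ge> 0" for r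
  proof -
    have "emeasure lborel (\<Union>k\<in>K. T k r) \<le> (\<Sum>k\<in>K. emeasure lborel (T k r))"
      using cT r K by (intro emeasure_subadditive_finite) auto
    also have "\<dots> \<le> (\<Sum>k\<in>K. ennreal (c k * r))"
      using cT r by (intro sum_mono) auto
    also have "\<dots> = ennreal ((\<Sum>k\<in>K. c k) * r)"
      using cT r by (simp add: sum_distrib_right)
    finally show ?thesis .
  qed
  moreover have "p \<in> (\<Union>k\<in>K. T k r)"
    if "k \<in> K" "fst p \<in> {0..Lx}" "\<bar>snd p - g k (fst p)\<bar> \<le> r" for r k p
    using cT[OF that(1)] that by blast
  ultimately show ?thesis by (rule that)
qed

lemma Lq_norm_le_two_level:
  fixes f :: "real \<times> real \<Rightarrow> complex"
  assumes q: "q \<ge> 1"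
    and A: "A \<in> sets borel" "emeasure lborel A \<le> ennreal \<alpha>"
    and B: "B \<in> sets borel" "emeasure lborel B \<le> ennreal \<beta>"
    and nonneg: "a \<ge> 0" "b \<ge> 0" "\<alpha> \<ge> 0" "\<beta> \<ge> 0"
    and bound: "AE p in lborel. p \<in> A \<longrightarrow> cmod (f p) \<le> a \<and> (p \<notin> B \<longrightarrow> cmod (f p) \<le> b)"
  shows "Lq_norm q A f \<le> ennreal ((a powr q * \<beta> + b powr q * \<alpha>) powr (1 / q))"
proof -
  define F where "F p = ennreal (cmod (f p) powr q) * indicator A p" for p
  define G where "G p = ennreal (a powr q) * indicator B p + ennreal (b powr q) * indicator A p" for p
  define X where "X = a powr q * \<beta> + b powr q * \<alpha>"
  have "AE p in lborel. F p \<le> G p"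
    using bound
  proof eventually_elim
    case (elim p)
    show ?case
    proof (cases "p \<in> A")
      case True
      then show ?thesis
        using elim q nonneg unfolding F_def G_def
        by (cases "p \<in> B") (auto intro!: ennreal_leI powr_mono2 add_increasing2)
    qed (simp add: F_def)
  qed
  then have "(\<integral>\<^sup>+p. F p \<partial>lebesgue) \<le> (\<integral>\<^sup>+p. G p \<partial>lborel)"
    by (simp add: nn_integral_completion nn_integral_mono_AE)
  also have "\<dots> = ennreal (a powr q) * emeasure lborel B + ennreal (b powr q) * emeasure lborel A"
    unfolding G_def using A B by (simp add: nn_integral_add nn_integral_cmult_indicator)
  also have "\<dots> \<le> ennreal (a powr q) * ennreal \<beta> + ennreal (b powr q) * ennreal \<alpha>"
    using A B by (intro add_mono mult_left_mono) auto
  also have "\<dots> = ennreal X"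
    unfolding X_def using nonneg by (simp add: ennreal_mult ennreal_plus)
  finally have I: "(\<integral>\<^sup>+p. F p \<partial>lebesgue) \<le> ennreal X" .
  have "X \<ge> 0" unfolding X_def using nonneg by simp
  then have "enn2real (\<integral>\<^sup>+p. F p \<partial>lebesgue) powr (1 / q) \<le> X powr (1 / q)"
    using I q by (intro powr_mono2 enn2real_leI) auto
  moreover have "(\<integral>\<^sup>+p. F p \<partial>lebesgue) \<noteq> \<infinity>"
    using I by (auto simp: top_unique)
  ultimately show ?thesis
    unfolding Lq_norm_def Let_def F_def X_def by (simp add: ennreal_leI)
qed

lemma two_level_powr_bound:
  fixes a b h q \<alpha> \<beta> :: real
  assumes h: "0 < h" "h \<le> 1" and q: "q \<ge> 1"
    and nonneg: "a \<ge> 0" "b \<ge> 0" "\<alpha> \<ge> 0" "\<beta> \<ge> 0"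
  shows "(a powr q * (\<beta> * h) + (b * h) powr q * \<alpha>) powr (1 / q) \<le> (a + b) * (1 + \<alpha> + \<beta>) * h powr (1 / q)"
proof -
  have ab: "a powr q \<le> (a + b) powr q" "b powr q \<le> (a + b) powr q"
    using nonneg q by (auto intro: powr_mono2)
  have hq: "h powr q \<le> h" using powr_mono'[of 1 q h] h q by simp
  have "a powr q * (\<beta> * h) \<le> (a + b) powr q * (\<beta> * h)"
    using ab(1) nonneg h by (intro mult_right_mono) auto
  moreover have "(b * h) powr q * \<alpha> \<le> (a + b) powr q * h * \<alpha>"
  proof (rule mult_right_mono)
    have "(b * h) powr q = b powr q * h powr q" using nonneg h by (simp add: powr_mult)
    also have "\<dots> \<le> (a + b) powr q * h" using ab(2) hq by (intro mult_mono) auto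
    finally show "(b * h) powr q \<le> (a + b) powr q * h" .
  qed (use nonneg in simp)
  ultimately have "a powr q * (\<beta> * h) + (b * h) powr q * \<alpha> \<le> (a + b) powr q * (\<beta> * h) + (a + b) powr q * h * \<alpha>"
    by (rule add_mono)
  also have "\<dots> = (a + b) powr q * h * (\<beta> + \<alpha>)"
    by (simp add: algebra_simps)
  also have "\<dots> \<le> (a + b) powr q * h * (1 + \<alpha> + \<beta>)"
    using h by (intro mult_left_mono) auto
  finally have le: "a powr q * (\<beta> * h) + (b * h) powr q * \<alpha> \<le> (a + b) powr q * h * (1 + \<alpha> + \<beta>)" .
  have "(a powr q * (\<beta> * h) + (b * h) powr q * \<alpha>) powr (1 / q) \<le> ((a + b) powr q * h * (1 + \<alpha> + \<beta>)) powr (1 / q)"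
    using le nonneg h q by (intro powr_mono2) auto
  also have "\<dots> = (a + b) * h powr (1 / q) * (1 + \<alpha> + \<beta>) powr (1 / q)"
    using nonneg h q by (simp add: powr_mult powr_powr)
  also have "\<dots> \<le> (a + b) * h powr (1 / q) * (1 + \<alpha> + \<beta>)"
    using powr_mono[of "1 / q" 1 "1 + \<alpha> + \<beta>"] nonneg q by (intro mult_left_mono) auto
  finally show ?thesis by (simp add: mult_ac)
qed

lemma stairstep_error_pointwise:
  assumes sl: "slicing H S hs"
    and bound: "\<forall>k\<in>{1..I+1}. \<forall>p\<in>region H Lx I g k. cmod (eps p) \<le> M"
    and lip: "\<forall>k\<in>{1..I+1}. \<forall>x y y'. (x, y) \<in> region H Lx I g k \<longrightarrow> (x, y') \<in> region H Lx I g k \<longrightarrow>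
       cmod (eps (x, y) - eps (x, y')) \<le> M * \<bar>y - y'\<bar>"
    and p: "(x, y) \<in> Omega H Lx"
    and j: "j \<in> {1..S}" "hs (j - 1) \<le> y" "y < hs j"
    and off: "\<forall>k\<in>{1..I}. y \<noteq> g k x \<and> (hs (j - 1) + hs j) / 2 \<noteq> g k x"
  shows "cmod (eps (x, y) - eps_h eps S hs (x, y)) \<le> 2 * M"
    and "\<forall>k\<in>{1..I}. mesh S hs < \<bar>y - g k x\<bar> \<Longrightarrow>
      cmod (eps (x, y) - eps_h eps S hs (x, y)) \<le> M * mesh S hs"
proof -
  define m where "m = (hs (j - 1) + hs j) / 2"
  have eh: "eps_h eps S hs (x, y) = eps (x, m)"
    using eps_h_on_slice[OF sl j(1), of "(x, y)"] j unfolding m_def by simp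
  have sb: "-H \<le> hs (j - 1)" "hs j \<le> H" "hs (j - 1) < hs j" "hs j - hs (j - 1) \<le> mesh S hs"
    using slice_bounds[OF sl j(1)] by auto
  have ym: "\<bar>y - m\<bar> \<le> mesh S hs" using j(2,3) sb unfolding m_def abs_le_iff by (auto simp: field_simps)
  have m: "-H < m" "m < H" using sb unfolding m_def by auto
  have mO: "(x, m) \<in> Omega H Lx" using p m unfolding Omega_def by auto
  obtain k where k: "k \<in> {1..I+1}" "(x, y) \<in> region H Lx I g k"
    using Omega_off_interfaces_in_region[OF p, of I g] off by auto
  obtain k' where k': "k' \<in> {1..I+1}" "(x, m) \<in> region H Lx I g k'"
    using Omega_off_interfaces_in_region[OF mO, of I g] off unfolding m_def by auto
  show "cmod (eps (x, y) - eps_h eps S hs (x, y)) \<le> 2 * M"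
  proof -
    have "cmod (eps (x, y)) \<le> M" "cmod (eps (x, m)) \<le> M" using bound k k' by auto
    then show ?thesis using norm_triangle_ineq4[of "eps (x, y)" "eps (x, m)"] eh by simp
  qed
  assume far: "\<forall>k\<in>{1..I}. mesh S hs < \<bar>y - g k x\<bar>"
  have "(x, m) \<in> region H Lx I g k"
    using region_vertical_stable[OF k(2) k(1) m] far ym by force
  then have "cmod (eps (x, y) - eps (x, m)) \<le> M * \<bar>y - m\<bar>"
    using lip k by blast
  also have "\<dots> \<le> M * mesh S hs"
  proof (rule mult_left_mono[OF ym])
    have "cmod (eps (x, y)) \<le> M" using bound k by auto
    then show "0 \<le> M" by (rule order_trans[OF norm_ge_zero])
  qed
  finally show "cmod (eps (x, y) - eps_h eps S hs (x, y)) \<le> M * mesh S hs"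
    using eh by simp
qed

lemma stairstep_exceptional_set_null:
  assumes sl: "slicing H S hs" and flat: "flat_points_on_lines Lx I g S hs"
    and C2: "\<forall>k\<in>{1..I}. piecewise_C2 Lx (g k)"
  obtains N where "N \<in> null_sets lborel"
    "\<And>x y k j. (x, y) \<notin> N \<Longrightarrow> x \<in> {0..Lx} \<Longrightarrow> k \<in> {1..I} \<Longrightarrow> j \<in> {1..S} \<Longrightarrow>
       y \<noteq> g k x \<and> (hs (j - 1) + hs j) / 2 \<noteq> g k x"
proof -
  obtain c T where "T 0 \<in> sets borel" "emeasure lborel (T 0) \<le> ennreal (c * 0)"
    and near: "\<And>r k p. k \<in> {1..I} \<Longrightarrow> fst p \<in> {0..Lx} \<Longrightarrow> \<bar>snd p - g k (fst p)\<bar> \<le> r \<Longrightarrow> p \<in> T r"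
    using piecewise_C2_graph_tubes[OF finite_atLeastAtMost C2] order_refl by metis
  then have graphs_null: "T 0 \<in> null_sets lborel"
    by (auto intro: null_setsI)
  define mid where "mid j = (hs (j - 1) + hs j) / 2" for j
  define A where "A = (\<Union>k\<in>{1..I}. \<Union>j\<in>{1..S}. {x\<in>{0..Lx}. g k x = mid j})"
  have "countable {x\<in>{0..Lx}. g k x = mid j}" if k: "k \<in> {1..I}" and j: "j \<in> {1..S}" for k j
  proof (rule piecewise_C2_level_set_countable[OF C2[rule_format, OF k]], intro ballI impI)
    fix x assume "x \<in> {0<..<Lx}" "(g k has_real_derivative 0) (at x)"
    then obtain i where "i \<in> {0..S}" "g k x = hs i"
      using flat k unfolding flat_points_on_lines_def by blast
    then show "g k x \<noteq> mid j" using slice_midpoint_not_node[OF sl j, of i] unfolding mid_def by auto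
  qed
  then have "countable A" unfolding A_def by (intro countable_UN[OF countableI_type] countable_UN) auto
  then have "T 0 \<union> A \<times> UNIV \<in> null_sets lborel"
    using countable_Times_UNIV_null graphs_null by blast
  moreover have "y \<noteq> g k x \<and> mid j \<noteq> g k x"
    if "(x, y) \<notin> T 0 \<union> A \<times> UNIV" "x \<in> {0..Lx}" "k \<in> {1..I}" "j \<in> {1..S}" for x y k j
  proof
    show "y \<noteq> g k x" using that near[of k "(x, y)" 0] by auto
    show "mid j \<noteq> g k x"
    proof
      assume "mid j = g k x"
      then have "x \<in> {x\<in>{0..Lx}. g k x = mid j}" using that(2) by simp
      then show False using that unfolding A_def by blast
    qed
  qed
  ultimately show ?thesis using that unfolding mid_def by blast
qed

lemma stairstep_error_AE:
  assumes sl: "slicing H S hs" and flat: "flat_points_on_lines Lx I g S hs"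
    and C2: "\<forall>k\<in>{1..I}. piecewise_C2 Lx (g k)"
    and bound: "\<forall>k\<in>{1..I+1}. \<forall>p\<in>region H Lx I g k. cmod (eps p) \<le> M"
    and lip: "\<forall>k\<in>{1..I+1}. \<forall>x y y'. (x, y) \<in> region H Lx I g k \<longrightarrow> (x, y') \<in> region H Lx I g k \<longrightarrow>
       cmod (eps (x, y) - eps (x, y')) \<le> M * \<bar>y - y'\<bar>"
  shows "AE p in lborel. p \<in> Omega H Lx \<longrightarrow>
    cmod (eps p - eps_h eps S hs p) \<le> 2 * M \<and>
    ((\<forall>k\<in>{1..I}. mesh S hs < \<bar>snd p - g k (fst p)\<bar>) \<longrightarrow> cmod (eps p - eps_h eps S hs p) \<le> M * mesh S hs)"
proof -
  obtain N where N: "N \<in> null_sets lborel"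
    and off: "\<And>x y k j. (x, y) \<notin> N \<Longrightarrow> x \<in> {0..Lx} \<Longrightarrow> k \<in> {1..I} \<Longrightarrow> j \<in> {1..S} \<Longrightarrow>
       y \<noteq> g k x \<and> (hs (j - 1) + hs j) / 2 \<noteq> g k x"
    using stairstep_exceptional_set_null[OF sl flat C2] by blast
  show ?thesis
    using AE_not_in[OF N]
  proof eventually_elim
    case (elim p)
    obtain x y where p: "p = (x, y)" by fastforce
    show ?case
    proof
      assume pO: "p \<in> Omega H Lx"
      then have xy: "0 < x" "x < Lx" "-H < y" "y < H" unfolding p Omega_def by auto
      obtain j where j: "j \<in> {1..S}" "hs (j - 1) \<le> y" "y < hs j"
        using slice_exists[OF sl, of y] xy by auto
      have "\<forall>k\<in>{1..I}. y \<noteq> g k x \<and> (hs (j - 1) + hs j) / 2 \<noteq> g k x"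
        using off[of x y _ j] elim xy j(1) unfolding p by auto
      from stairstep_error_pointwise[OF sl bound lip pO[unfolded p] j this]
      show "cmod (eps p - eps_h eps S hs p) \<le> 2 * M \<and>
        ((\<forall>k\<in>{1..I}. mesh S hs < \<bar>snd p - g k (fst p)\<bar>) \<longrightarrow> cmod (eps p - eps_h eps S hs p) \<le> M * mesh S hs)"
        unfolding p by auto
    qed
  qed
qed

lemma stairstep_Lq_error:
  assumes H: "H > 0" and Lx: "Lx > 0" and q: "q \<ge> 1"
    and sl: "slicing H S hs" and flat: "flat_points_on_lines Lx I g S hs" and h1: "mesh S hs \<le> 1"
    and C2: "\<forall>k\<in>{1..I}. piecewise_C2 Lx (g k)"
    and M: "M \<ge> 0"
    and bound: "\<forall>k\<in>{1..I+1}. \<forall>p\<in>region H Lx I g k. cmod (eps p) \<le> M"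
    and lip: "\<forall>k\<in>{1..I+1}. \<forall>x y y'. (x, y) \<in> region H Lx I g k \<longrightarrow> (x, y') \<in> region H Lx I g k \<longrightarrow>
       cmod (eps (x, y) - eps (x, y')) \<le> M * \<bar>y - y'\<bar>"
    and c: "c \<ge> 0" and T: "\<And>r. r \<ge> 0 \<Longrightarrow> T r \<in> sets borel"
      "\<And>r. r \<ge> 0 \<Longrightarrow> emeasure lborel (T r) \<le> ennreal (c * r)"
    and near: "\<And>r k p. k \<in> {1..I} \<Longrightarrow> fst p \<in> {0..Lx} \<Longrightarrow> \<bar>snd p - g k (fst p)\<bar> \<le> r \<Longrightarrow> p \<in> T r"
  shows "Lq_norm q (Omega H Lx) (\<lambda>x. eps x - eps_h eps S hs x)
    \<le> ennreal (3 * M * (1 + 2 * H * Lx + c) * mesh S hs powr (1 / q))"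
proof -
  define h where "h = mesh S hs"
  have h: "0 < h" "h \<le> 1" using mesh_pos[OF sl] h1 unfolding h_def by auto
  have D: "2 * H * Lx \<ge> 0" using H Lx by simp
  have "AE p in lborel. p \<in> Omega H Lx \<longrightarrow> cmod (eps p - eps_h eps S hs p) \<le> 2 * M \<and>
      (p \<notin> T h \<longrightarrow> cmod (eps p - eps_h eps S hs p) \<le> M * h)"
    using stairstep_error_AE[OF sl flat C2 bound lip]
  proof eventually_elim
    case (elim p)
    have "p \<notin> T h \<Longrightarrow> p \<in> Omega H Lx \<Longrightarrow> \<forall>k\<in>{1..I}. h < \<bar>snd p - g k (fst p)\<bar>"
      using near[of _ p h] unfolding Omega_def by (force simp: not_le)
    then show ?case using elim unfolding h_def by blast
  qed
  from Lq_norm_le_two_level[where a = "2 * M" and b = "M * h",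
      OF q Omega_measure(1)[OF H Lx] eq_refl[OF Omega_measure(2)[OF H Lx]] T _ _ D _ this] h M c
  have "Lq_norm q (Omega H Lx) (\<lambda>x. eps x - eps_h eps S hs x)
      \<le> ennreal (((2 * M) powr q * (c * h) + (M * h) powr q * (2 * H * Lx)) powr (1 / q))"
    by (simp add: mult_ac)
  also have "\<dots> \<le> ennreal (3 * M * (1 + 2 * H * Lx + c) * h powr (1 / q))"
    using two_level_powr_bound[OF h q, of "2 * M" M "2 * H * Lx" c] M c D
    by (intro ennreal_leI) (simp add: mult_ac)
  finally show ?thesis unfolding h_def .
qed

theorem lemma6:
  fixes H Lx \<delta> CD :: real and I :: nat and g :: "nat \<Rightarrow> real \<Rightarrow> real"
    and eps :: "real \<times> real \<Rightarrow> complex"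
  assumes "H > 0" and "Lx > 0" and "I \<ge> 1" and "\<delta> > 0" and "CD > 0"
    and "\<forall>k\<in>{1..I}. piecewise_lipschitz_iface Lx (g k)"
    and "\<forall>k\<le>I. \<forall>x\<in>{0..Lx}. iface H I g k x + \<delta> \<le> iface H I g (Suc k) x"
    and "\<forall>k\<in>{1..I+1}. C11_on (region H Lx I g k) eps"
    and "\<forall>k\<in>{1..I}. piecewise_C2 Lx (g k)"
  shows "\<exists>C>0. \<exists>h0>0. \<forall>q::real. q \<ge> 1 \<longrightarrow>
           (\<forall>S hs. slicing H S hs \<and> mesh_ratio_ok CD S hs \<and> flat_points_on_lines Lx I g S hs
                  \<and> mesh S hs \<le> h0 \<longrightarrow>
              Lq_norm q (Omega H Lx) (\<lambda>x. eps x - eps_h eps S hs x)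
                \<le> ennreal (C * mesh S hs powr (1 / q)))"
proof -
  obtain M where M: "M > 0" and bound: "\<forall>k\<in>{1..I+1}. \<forall>p\<in>region H Lx I g k. cmod (eps p) \<le> M"
    and lip: "\<forall>k\<in>{1..I+1}. \<forall>x y y'. (x, y) \<in> region H Lx I g k \<longrightarrow> (x, y') \<in> region H Lx I g k \<longrightarrow>
       cmod (eps (x, y) - eps (x, y')) \<le> M * \<bar>y - y'\<bar>"
    using regions_uniform_bounds[OF assms(8)] by blast
  obtain c T where c: "c \<ge> 0" and T: "\<And>r. r \<ge> 0 \<Longrightarrow> T r \<in> sets borel"
      "\<And>r. r \<ge> 0 \<Longrightarrow> emeasure lborel (T r) \<le> ennreal (c * r)"
    and near: "\<And>r k p. k \<in> {1..I} \<Longrightarrow> fst p \<in> {0..Lx} \<Longrightarrow> \<bar>snd p - g k (fst p)\<bar> \<le> r \<Longrightarrow> p \<in> T r"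
    using piecewise_C2_graph_tubes[OF finite_atLeastAtMost assms(9)] by metis
  have "1 + 2 * H * Lx + c > 0" using c assms(1,2) by (simp add: add_pos_nonneg)
  then have "3 * M * (1 + 2 * H * Lx + c) > 0" using M by simp
  moreover have "Lq_norm q (Omega H Lx) (\<lambda>x. eps x - eps_h eps S hs x)
      \<le> ennreal (3 * M * (1 + 2 * H * Lx + c) * mesh S hs powr (1 / q))"
    if "q \<ge> 1" "slicing H S hs" "flat_points_on_lines Lx I g S hs" "mesh S hs \<le> 1" for q S hs
    using stairstep_Lq_error[OF assms(1,2) that assms(9) _ bound lip c T near] M by simp
  ultimately show ?thesis by (intro exI[of _ "3 * M * (1 + 2 * H * Lx + c)"] conjI exI[of _ 1]) auto
qed

end
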